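(* Let $X$ be a finite set and $\Phi=\{\phi_x\}_{x\in X}$ a frame for a finite-dimensional Hilbert space $\mathcal{H}$ (i.e. a spanning family), with Gram matrix $\mathcal{G}=[\langle\phi_y,\phi_x\rangle]_{x,y\in X}$. For a permutation $\sigma$ of $X$ let $P_\sigma=[\delta_{x,\sigma y}]_{x,y\in X}$, and let $G(\Phi)=\{\sigma\in S(X): P_\sigma\mathcal{G}=\mathcal{G}P_\sigma\}$. Fix $x_0\in X$ and let $H(\Phi)$ be the stabilizer of $x_0$ in $G(\Phi)$. Then: (i) $\Phi$ is a homogeneous frame if and only if $G(\Phi)$ acts transitively on $X$; in that case $\Phi$ is a $(G(\Phi),H(\Phi))$-frame, with respect to the identification $\sigma H(\Phi)\leftrightarrow \sigma x_0$ of $G(\Phi)/H(\Phi)$ with $X$. (ii) If $\Phi$ is a $(G,H)$-frame for some Gelfand pair $(G,H)$, then $(G(\Phi),H(\Phi))$ is also a Gelfand pair.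
   Context: Given a finite group $G$ and subgroup $H$, we say $\Phi=\{\phi_x\}_{x\in X}$ is a $(G,H)$-frame if there are a bijection $\beta\colon X\to G/H$, a unitary representation $\rho\colon G\to U(\mathcal{H})$ and a vector $v\in\mathcal{H}$ with $\rho(h)v=v$ for all $h\in H$, such that $\phi_x=\rho(g)v$ whenever $\beta(x)=gH$. $\Phi$ is homogeneous if it is a $(G,H)$-frame for some finite group $G$ and subgroup $H$. For a finite group $G$ and subgroup $H$, $(G,H)$ is a Gelfand pair if the algebra of complex $G/H\times G/H$ matrices $M$ satisfying $M_{g x,g y}=M_{x,y}$ for all $g\in G$, $x,y\in G/H$ (left multiplication action) is commutative. *)

theory Defs
  imports "HOL-Analysis.Analysis" "HOL-Algebra.Coset" "HOL-Combinatorics.Permutations"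
begin

text \<open>The finite-dimensional complex Hilbert space is modelled as complex^'n with the
standard inner product, linear in the first argument.\<close>

definition cinner :: "complex^'n \<Rightarrow> complex^'n \<Rightarrow> complex" where
  "cinner u v = (\<Sum>i\<in>UNIV. u$i * cnj (v$i))"

definition is_frame :: "'x set \<Rightarrow> ('x \<Rightarrow> complex^'n) \<Rightarrow> bool" where
  "is_frame X \<Phi> \<longleftrightarrow> finite X \<and> (\<forall>w. \<exists>c. w = (\<Sum>x\<in>X. c x *s \<Phi> x))"

definition unitary_mat :: "complex^'n^'n \<Rightarrow> bool" where
  "unitary_mat U \<longleftrightarrow> (\<forall>u v. cinner (U *v u) (U *v v) = cinner u v) \<and> surj (\<lambda>u. U *v u)"

definition unitary_rep :: "('g, 'b) monoid_scheme \<Rightarrow> ('g \<Rightarrow> complex^'n^'n) \<Rightarrow> bool" where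
  "unitary_rep G \<rho> \<longleftrightarrow> (\<forall>g\<in>carrier G. unitary_mat (\<rho> g)) \<and>
     (\<forall>g\<in>carrier G. \<forall>h\<in>carrier G. \<rho> (g \<otimes>\<^bsub>G\<^esub> h) = \<rho> g ** \<rho> h)"

definition lcosets :: "('g, 'b) monoid_scheme \<Rightarrow> 'g set \<Rightarrow> 'g set set" where
  "lcosets G H = {g <#\<^bsub>G\<^esub> H | g. g \<in> carrier G}"

definition GH_frame_via ::
  "('g, 'b) monoid_scheme \<Rightarrow> 'g set \<Rightarrow> 'x set \<Rightarrow> ('x \<Rightarrow> complex^'n) \<Rightarrow> ('x \<Rightarrow> 'g set) \<Rightarrow> bool" where
  "GH_frame_via G H X \<Phi> \<beta> \<longleftrightarrow>
     group G \<and> finite (carrier G) \<and> subgroup H G \<and>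
     bij_betw \<beta> X (lcosets G H) \<and>
     (\<exists>\<rho> v. unitary_rep G \<rho> \<and> (\<forall>h\<in>H. \<rho> h *v v = v) \<and>
        (\<forall>x\<in>X. \<forall>g\<in>carrier G. \<beta> x = g <#\<^bsub>G\<^esub> H \<longrightarrow> \<Phi> x = \<rho> g *v v))"

definition GH_frame ::
  "('g, 'b) monoid_scheme \<Rightarrow> 'g set \<Rightarrow> 'x set \<Rightarrow> ('x \<Rightarrow> complex^'n) \<Rightarrow> bool" where
  "GH_frame G H X \<Phi> \<longleftrightarrow> (\<exists>\<beta>. GH_frame_via G H X \<Phi> \<beta>)"

text \<open>Homogeneous: a (G,H)-frame for some finite group G. Since every finite group is
isomorphic to one whose elements are natural numbers, groups are taken with carrier in nat.\<close>
definition homogeneous_frame :: "'x set \<Rightarrow> ('x \<Rightarrow> complex^'n) \<Rightarrow> bool" where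
  "homogeneous_frame X \<Phi> \<longleftrightarrow> (\<exists>(G::nat monoid) H. GH_frame G H X \<Phi>)"

definition gelfand_pair :: "('g, 'b) monoid_scheme \<Rightarrow> 'g set \<Rightarrow> bool" where
  "gelfand_pair G H \<longleftrightarrow>
     (\<forall>M N :: 'g set \<Rightarrow> 'g set \<Rightarrow> complex.
        (\<forall>g\<in>carrier G. \<forall>a\<in>lcosets G H. \<forall>b\<in>lcosets G H.
            M (g <#\<^bsub>G\<^esub> a) (g <#\<^bsub>G\<^esub> b) = M a b \<and> N (g <#\<^bsub>G\<^esub> a) (g <#\<^bsub>G\<^esub> b) = N a b)
        \<longrightarrow> (\<forall>a\<in>lcosets G H. \<forall>b\<in>lcosets G H.
              (\<Sum>c\<in>lcosets G H. M a c * N c b) = (\<Sum>c\<in>lcosets G H. N a c * M c b)))"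

definition gram :: "('x \<Rightarrow> complex^'n) \<Rightarrow> 'x \<Rightarrow> 'x \<Rightarrow> complex" where
  "gram \<Phi> x y = cinner (\<Phi> y) (\<Phi> x)"

definition perm_mat :: "('x \<Rightarrow> 'x) \<Rightarrow> 'x \<Rightarrow> 'x \<Rightarrow> complex" where
  "perm_mat \<sigma> x y = (if x = \<sigma> y then 1 else 0)"

definition sym_group_frame :: "'x set \<Rightarrow> ('x \<Rightarrow> complex^'n) \<Rightarrow> ('x \<Rightarrow> 'x) monoid" where
  "sym_group_frame X \<Phi> =
    \<lparr>carrier = {\<sigma>. \<sigma> permutes X \<and>
        (\<forall>x\<in>X. \<forall>y\<in>X. (\<Sum>z\<in>X. perm_mat \<sigma> x z * gram \<Phi> z y) = (\<Sum>z\<in>X. gram \<Phi> x z * perm_mat \<sigma> z y))},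
     mult = (\<circ>), one = id\<rparr>"

definition stab_frame :: "'x set \<Rightarrow> ('x \<Rightarrow> complex^'n) \<Rightarrow> 'x \<Rightarrow> ('x \<Rightarrow> 'x) set" where
  "stab_frame X \<Phi> x0 = {\<sigma> \<in> carrier (sym_group_frame X \<Phi>). \<sigma> x0 = x0}"

end

theory Submission
  imports Defs "HOL-Algebra.Weak_Morphisms"
begin

text \<open>A permutation \<open>\<sigma>\<close> of \<open>X\<close> commutes with the Gram matrix iff it preserves it, and then it
preserves every linear relation among the vectors \<open>\<Phi> x\<close>, since the norm of a linear combination is
computed from the Gram matrix alone. Hence \<open>\<Phi> x \<mapsto> \<Phi> (\<sigma> x)\<close> extends to a unitary \<open>\<rho> \<sigma>\<close>, which
yields a unitary representation of \<open>G(\<Phi>)\<close>; when \<open>G(\<Phi>)\<close> is transitive, \<open>\<Phi>\<close> is the orbit of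
\<open>\<Phi> x0\<close>, i.e. a \<open>(G(\<Phi>), H(\<Phi>))\<close>-frame. Conversely, for a \<open>(G,H)\<close>-frame the group \<open>G\<close> acts on
\<open>X \<cong> G/H\<close> by left translation of cosets, and \<open>g\<close> moves \<open>\<Phi> x\<close> by the unitary \<open>\<rho> g\<close>, so it
acts by Gram-preserving permutations, transitively. This action makes
\<open>G/H \<cong> X \<cong> G(\<Phi>)/H(\<Phi>)\<close> equivariant, so \<open>G(\<Phi>)\<close>-invariant kernels pull back to
\<open>G\<close>-invariant ones and commutativity carries over.\<close>

text \<open>Below \<open>inv\<close> is the inverse of a function; group inverses are written \<open>m_inv G\<close>.\<close>
unbundle no m_inv_syntax

lemma cinner_sum_left: "cinner (\<Sum>x\<in>A. c x *s u x) w = (\<Sum>x\<in>A. c x * cinner (u x) w)"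
  unfolding cinner_def
  by (simp add: sum_distrib_left sum_distrib_right mult.assoc sum.swap[of _ UNIV A])

lemma cinner_sum_right: "cinner w (\<Sum>x\<in>A. c x *s u x) = (\<Sum>x\<in>A. cnj (c x) * cinner w (u x))"
  unfolding cinner_def
  by (simp add: sum_distrib_left sum_distrib_right mult.assoc mult.left_commute sum.swap[of _ UNIV A])

lemma cinner_self_eq_0: "cinner w w = 0 \<longleftrightarrow> w = 0"
proof
  assume "cinner w w = 0"
  then have "complex_of_real (\<Sum>i\<in>UNIV. (cmod (w$i))\<^sup>2) = 0"
    unfolding cinner_def complex_norm_square of_real_sum .
  then have "\<forall>i\<in>UNIV. (cmod (w$i))\<^sup>2 = 0"
    by (subst (asm) of_real_eq_0_iff, subst (asm) sum_nonneg_eq_0_iff) auto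
  then show "w = 0" by (simp add: vec_eq_iff)
qed (simp add: cinner_def)

lemma cinner_lincomb:
  "cinner (\<Sum>x\<in>X. c x *s \<Phi> x) (\<Sum>y\<in>X. d y *s \<Phi> y) = (\<Sum>y\<in>X. \<Sum>x\<in>X. c x * cnj (d y) * gram \<Phi> y x)"
  unfolding cinner_sum_left cinner_sum_right gram_def sum_distrib_left by (simp add: mult_ac)

lemma lincomb_eq_if_gram_eq:
  assumes gram: "\<forall>x\<in>X. \<forall>y\<in>X. gram \<Psi> x y = gram \<Phi> x y"
    and eq: "(\<Sum>x\<in>X. c x *s \<Phi> x) = (\<Sum>x\<in>X. d x *s \<Phi> x)"
  shows "(\<Sum>x\<in>X. c x *s \<Psi> x) = (\<Sum>x\<in>X. d x *s \<Psi> x)"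
proof -
  define e where "e x = c x - d x" for x
  have diff: "(\<Sum>x\<in>X. e x *s F x) = (\<Sum>x\<in>X. c x *s F x) - (\<Sum>x\<in>X. d x *s F x)" for F :: "_ \<Rightarrow> complex^'n"
    by (simp add: e_def vector_sub_rdistrib sum_subtractf)
  have "cinner (\<Sum>x\<in>X. e x *s \<Psi> x) (\<Sum>x\<in>X. e x *s \<Psi> x) = cinner (\<Sum>x\<in>X. e x *s \<Phi> x) (\<Sum>x\<in>X. e x *s \<Phi> x)"
    unfolding cinner_lincomb using gram by (intro sum.cong refl) simp
  also have "\<dots> = 0" using eq by (simp add: diff cinner_def)
  finally show ?thesis by (simp add: cinner_self_eq_0 diff)
qed

lemma is_frame_lincombE:
  assumes "is_frame X \<Phi>" obtains c where "w = (\<Sum>x\<in>X. c x *s \<Phi> x)"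
  using assms unfolding is_frame_def by blast

definition frame_coeff :: "'x set \<Rightarrow> ('x \<Rightarrow> complex^'n) \<Rightarrow> 'n \<Rightarrow> 'x \<Rightarrow> complex" where
  "frame_coeff X \<Phi> j = (SOME c. axis j 1 = (\<Sum>x\<in>X. c x *s \<Phi> x))"

lemma axis_eq_frame_coeff:
  assumes "is_frame X \<Phi>" shows "axis j 1 = (\<Sum>x\<in>X. frame_coeff X \<Phi> j x *s \<Phi> x)"
proof -
  have "\<exists>c. axis j 1 = (\<Sum>x\<in>X. c x *s \<Phi> x)" using assms by (simp add: is_frame_def)
  then show ?thesis unfolding frame_coeff_def by (rule someI_ex)
qed

text \<open>The matrix sending the basis vector \<open>e\<^sub>j = \<Sum>x c\<^sub>j\<^sub>x \<Phi> x\<close> to \<open>\<Sum>x c\<^sub>j\<^sub>x \<Psi> x\<close>.\<close>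
definition transfer_mat :: "'x set \<Rightarrow> ('x \<Rightarrow> complex^'n) \<Rightarrow> ('x \<Rightarrow> complex^'n) \<Rightarrow> complex^'n^'n" where
  "transfer_mat X \<Phi> \<Psi> = (\<chi> i j. \<Sum>x\<in>X. frame_coeff X \<Phi> j x * \<Psi> x $ i)"

lemma transfer_mat_mult:
  "transfer_mat X \<Phi> \<Psi> *v w = (\<Sum>x\<in>X. (\<Sum>j\<in>UNIV. w$j * frame_coeff X \<Phi> j x) *s \<Psi> x)"
  by (simp add: vec_eq_iff transfer_mat_def matrix_vector_mult_def sum_distrib_left sum_distrib_right
      mult_ac sum.swap[of _ UNIV X])

lemma lincomb_frame_coeff:
  assumes "is_frame X \<Phi>"
  shows "(\<Sum>x\<in>X. (\<Sum>j\<in>UNIV. w$j * frame_coeff X \<Phi> j x) *s \<Phi> x) = w"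
proof -
  have "transfer_mat X \<Phi> \<Phi> = mat 1"
    using axis_eq_frame_coeff[OF assms]
    by (simp add: vec_eq_iff transfer_mat_def mat_def axis_def)
  then show ?thesis using transfer_mat_mult[of X \<Phi> \<Phi> w] by simp
qed

lemma transfer_mat_lincomb:
  assumes frame: "is_frame X \<Phi>" and gram: "\<forall>x\<in>X. \<forall>y\<in>X. gram \<Psi> x y = gram \<Phi> x y"
  shows "transfer_mat X \<Phi> \<Psi> *v (\<Sum>x\<in>X. c x *s \<Phi> x) = (\<Sum>x\<in>X. c x *s \<Psi> x)"
  unfolding transfer_mat_mult
  by (rule lincomb_eq_if_gram_eq[OF gram lincomb_frame_coeff[OF frame]])

lemma transfer_mat_frame:
  assumes frame: "is_frame X \<Phi>" and gram: "\<forall>x\<in>X. \<forall>y\<in>X. gram \<Psi> x y = gram \<Phi> x y"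
    and y: "y \<in> X"
  shows "transfer_mat X \<Phi> \<Psi> *v \<Phi> y = \<Psi> y"
proof -
  have delta: "(\<Sum>x\<in>X. (if x = y then 1 else 0) *s F x) = F y" for F :: "_ \<Rightarrow> complex^'n"
    using frame y by (simp add: is_frame_def if_distrib[of "\<lambda>c. c *s _"] sum.delta' cong: if_cong)
  show ?thesis
    using transfer_mat_lincomb[OF frame gram, of "\<lambda>x. if x = y then 1 else 0"] by (simp only: delta)
qed

lemma unitary_transfer_mat:
  assumes frame: "is_frame X \<Phi>" and frame': "is_frame X \<Psi>"
    and gram: "\<forall>x\<in>X. \<forall>y\<in>X. gram \<Psi> x y = gram \<Phi> x y"
  shows "unitary_mat (transfer_mat X \<Phi> \<Psi>)"
  unfolding unitary_mat_def
proof
  let ?U = "transfer_mat X \<Phi> \<Psi>"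
  show "\<forall>u v. cinner (?U *v u) (?U *v v) = cinner u v"
  proof (intro allI)
    fix u v
    obtain a where "u = (\<Sum>x\<in>X. a x *s \<Phi> x)" using is_frame_lincombE[OF frame] .
    moreover obtain b where "v = (\<Sum>x\<in>X. b x *s \<Phi> x)" using is_frame_lincombE[OF frame] .
    ultimately show "cinner (?U *v u) (?U *v v) = cinner u v"
      using gram by (simp add: transfer_mat_lincomb[OF frame gram] cinner_lincomb)
  qed
  have "w \<in> range ((*v) ?U)" for w
  proof -
    obtain c where "w = (\<Sum>x\<in>X. c x *s \<Psi> x)" using is_frame_lincombE[OF frame'] .
    then have "w = ?U *v (\<Sum>x\<in>X. c x *s \<Phi> x)" by (simp add: transfer_mat_lincomb[OF frame gram])
    then show ?thesis by blast
  qed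
  then show "surj ((*v) ?U)" by blast
qed

lemma matrix_vector_mult_lincomb:
  "(A :: 'a::comm_ring_1^'n^'m) *v (\<Sum>x\<in>X. c x *s v x) = (\<Sum>x\<in>X. c x *s (A *v v x))"
  by (simp add: vec_eq_iff matrix_vector_mult_def sum_distrib_left mult.left_commute sum.swap[of _ UNIV X])

lemma mat_eq_if_eq_on_frame:
  assumes frame: "is_frame X \<Phi>" and eq: "\<forall>y\<in>X. A *v \<Phi> y = B *v \<Phi> y"
  shows "A = B"
proof (rule matrix_eq[THEN iffD2], rule allI)
  fix w
  obtain c where "w = (\<Sum>x\<in>X. c x *s \<Phi> x)" using is_frame_lincombE[OF frame] .
  then show "A *v w = B *v w" using eq by (simp add: matrix_vector_mult_lincomb)
qed

lemma sum_perm_mat_mult: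
  assumes "finite X" "\<sigma> permutes X" "x \<in> X"
  shows "(\<Sum>z\<in>X. perm_mat \<sigma> x z * M z) = M (inv \<sigma> x)"
proof -
  have "perm_mat \<sigma> x z = (if z = inv \<sigma> x then 1 else 0)" for z
    using permutes_inverses[OF assms(2)] by (auto simp: perm_mat_def)
  then have "(\<Sum>z\<in>X. perm_mat \<sigma> x z * M z) = (\<Sum>z\<in>X. if z = inv \<sigma> x then M z else 0)"
    by (intro sum.cong) auto
  then show ?thesis
    using assms permutes_in_image[OF permutes_inv[OF assms(2)]] by (simp add: sum.delta')
qed

lemma sum_mult_perm_mat:
  assumes "finite X" "\<sigma> permutes X" "y \<in> X"
  shows "(\<Sum>z\<in>X. M z * perm_mat \<sigma> z y) = M (\<sigma> y)"
  using assms permutes_in_image[OF assms(2)] by (simp add: perm_mat_def if_distrib sum.delta cong: if_cong)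

lemma carrier_sym_group_frame:
  assumes "finite X"
  shows "carrier (sym_group_frame X \<Phi>) =
    {\<sigma>. \<sigma> permutes X \<and> (\<forall>x\<in>X. \<forall>y\<in>X. gram \<Phi> (\<sigma> x) (\<sigma> y) = gram \<Phi> x y)}"
proof -
  have "(\<forall>x\<in>X. \<forall>y\<in>X. (\<Sum>z\<in>X. perm_mat \<sigma> x z * gram \<Phi> z y) = (\<Sum>z\<in>X. gram \<Phi> x z * perm_mat \<sigma> z y))
      \<longleftrightarrow> (\<forall>x\<in>X. \<forall>y\<in>X. gram \<Phi> (\<sigma> x) (\<sigma> y) = gram \<Phi> x y)" if \<sigma>: "\<sigma> permutes X" for \<sigma>
  proof -
    have "(\<forall>x\<in>X. \<forall>y\<in>X. (\<Sum>z\<in>X. perm_mat \<sigma> x z * gram \<Phi> z y) = (\<Sum>z\<in>X. gram \<Phi> x z * perm_mat \<sigma> z y))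
        \<longleftrightarrow> (\<forall>x\<in>X. \<forall>y\<in>X. gram \<Phi> (inv \<sigma> x) y = gram \<Phi> x (\<sigma> y))"
      using assms \<sigma> by (simp add: sum_perm_mat_mult sum_mult_perm_mat)
    also have "\<dots> \<longleftrightarrow> (\<forall>x\<in>X. \<forall>y\<in>X. gram \<Phi> (\<sigma> x) (\<sigma> y) = gram \<Phi> x y)"
      using permutes_in_image[OF \<sigma>] permutes_in_image[OF permutes_inv[OF \<sigma>]] permutes_inverses[OF \<sigma>]
      by metis
    finally show ?thesis .
  qed
  then show ?thesis unfolding sym_group_frame_def by auto
qed

lemma mult_sym_group_frame [simp]: "mult (sym_group_frame X \<Phi>) = (\<circ>)"
  and one_sym_group_frame [simp]: "one (sym_group_frame X \<Phi>) = id"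
  by (simp_all add: sym_group_frame_def)

definition transporters :: "'x set \<Rightarrow> ('x \<Rightarrow> complex^'n) \<Rightarrow> 'x \<Rightarrow> 'x \<Rightarrow> ('x \<Rightarrow> 'x) set" where
  "transporters X \<Phi> x0 x = {\<sigma> \<in> carrier (sym_group_frame X \<Phi>). \<sigma> x0 = x}"

lemma stab_frame_eq_transporters: "stab_frame X \<Phi> x0 = transporters X \<Phi> x0 x0"
  by (simp add: stab_frame_def transporters_def)

context
  fixes X :: "'x set" and \<Phi> :: "'x \<Rightarrow> complex^'n"
  assumes fin: "finite X"
begin

lemma sym_group_frame_memD:
  assumes "\<sigma> \<in> carrier (sym_group_frame X \<Phi>)"
  shows "\<sigma> permutes X" and "\<And>x y. x \<in> X \<Longrightarrow> y \<in> X \<Longrightarrow> gram \<Phi> (\<sigma> x) (\<sigma> y) = gram \<Phi> x y"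
  using assms by (auto simp: carrier_sym_group_frame[OF fin])

lemma inv_in_sym_group_frame:
  assumes "\<sigma> \<in> carrier (sym_group_frame X \<Phi>)"
  shows "inv \<sigma> \<in> carrier (sym_group_frame X \<Phi>)"
proof -
  note \<sigma> = sym_group_frame_memD[OF assms]
  have "gram \<Phi> (inv \<sigma> x) (inv \<sigma> y) = gram \<Phi> x y" if "x \<in> X" "y \<in> X" for x y
    using \<sigma>(2)[of "inv \<sigma> x" "inv \<sigma> y"] that permutes_in_image[OF permutes_inv[OF \<sigma>(1)]]
      permutes_inverses[OF \<sigma>(1)] by simp
  then show ?thesis using permutes_inv[OF \<sigma>(1)] by (simp add: carrier_sym_group_frame[OF fin])
qed

lemma comp_in_sym_group_frame:
  assumes "\<sigma> \<in> carrier (sym_group_frame X \<Phi>)" "\<tau> \<in> carrier (sym_group_frame X \<Phi>)"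
  shows "\<sigma> \<circ> \<tau> \<in> carrier (sym_group_frame X \<Phi>)"
  using sym_group_frame_memD[OF assms(1)] sym_group_frame_memD[OF assms(2)]
  by (simp add: carrier_sym_group_frame[OF fin] permutes_compose permutes_in_image)

lemma id_in_sym_group_frame: "id \<in> carrier (sym_group_frame X \<Phi>)"
  by (simp add: carrier_sym_group_frame[OF fin] permutes_id)

lemma group_sym_group_frame: "group (sym_group_frame X \<Phi>)"
proof (rule groupI)
  fix \<sigma> assume \<sigma>: "\<sigma> \<in> carrier (sym_group_frame X \<Phi>)"
  show "\<exists>\<tau>\<in>carrier (sym_group_frame X \<Phi>). \<tau> \<otimes>\<^bsub>sym_group_frame X \<Phi>\<^esub> \<sigma> = \<one>\<^bsub>sym_group_frame X \<Phi>\<^esub>"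
    using inv_in_sym_group_frame[OF \<sigma>] permutes_inv_o(2)[OF sym_group_frame_memD(1)[OF \<sigma>]]
    by auto
qed (auto simp: comp_in_sym_group_frame id_in_sym_group_frame o_assoc)

lemma finite_carrier_sym_group_frame: "finite (carrier (sym_group_frame X \<Phi>))"
  by (rule finite_subset[OF _ finite_permutations[OF fin]]) (auto simp: carrier_sym_group_frame[OF fin])

lemma m_inv_sym_group_frame:
  assumes "\<sigma> \<in> carrier (sym_group_frame X \<Phi>)"
  shows "m_inv (sym_group_frame X \<Phi>) \<sigma> = inv \<sigma>"
  using group.inv_equality[OF group_sym_group_frame _ assms inv_in_sym_group_frame[OF assms]]
    permutes_inv_o(2)[OF sym_group_frame_memD(1)[OF assms]]
  by simp

lemma l_coset_transporters:
  assumes \<sigma>: "\<sigma> \<in> carrier (sym_group_frame X \<Phi>)"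
  shows "\<sigma> <#\<^bsub>sym_group_frame X \<Phi>\<^esub> transporters X \<Phi> x0 x = transporters X \<Phi> x0 (\<sigma> x)"
proof
  show "\<sigma> <#\<^bsub>sym_group_frame X \<Phi>\<^esub> transporters X \<Phi> x0 x \<subseteq> transporters X \<Phi> x0 (\<sigma> x)"
    using comp_in_sym_group_frame[OF \<sigma>] by (auto simp: l_coset_def transporters_def)
next
  show "transporters X \<Phi> x0 (\<sigma> x) \<subseteq> \<sigma> <#\<^bsub>sym_group_frame X \<Phi>\<^esub> transporters X \<Phi> x0 x"
  proof
    fix \<tau> assume \<tau>: "\<tau> \<in> transporters X \<Phi> x0 (\<sigma> x)"
    have p: "\<sigma> permutes X" by (rule sym_group_frame_memD(1)[OF \<sigma>])
    have "inv \<sigma> \<circ> \<tau> \<in> transporters X \<Phi> x0 x"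
      using \<tau> comp_in_sym_group_frame[OF inv_in_sym_group_frame[OF \<sigma>]] permutes_inverses(2)[OF p]
      by (auto simp: transporters_def)
    moreover have "\<tau> = \<sigma> \<circ> (inv \<sigma> \<circ> \<tau>)"
      by (simp add: fun_eq_iff permutes_inverses(1)[OF p])
    ultimately show "\<tau> \<in> \<sigma> <#\<^bsub>sym_group_frame X \<Phi>\<^esub> transporters X \<Phi> x0 x"
      by (auto simp: l_coset_def)
  qed
qed

lemma l_coset_stab_frame:
  assumes "\<sigma> \<in> carrier (sym_group_frame X \<Phi>)"
  shows "\<sigma> <#\<^bsub>sym_group_frame X \<Phi>\<^esub> stab_frame X \<Phi> x0 = transporters X \<Phi> x0 (\<sigma> x0)"
  using l_coset_transporters[OF assms] by (simp add: stab_frame_eq_transporters)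

lemma subgroup_stab_frame: "subgroup (stab_frame X \<Phi> x0) (sym_group_frame X \<Phi>)"
proof (rule group.subgroupI[OF group_sym_group_frame])
  show "stab_frame X \<Phi> x0 \<subseteq> carrier (sym_group_frame X \<Phi>)" by (auto simp: stab_frame_def)
  show "stab_frame X \<Phi> x0 \<noteq> {}" using id_in_sym_group_frame by (auto simp: stab_frame_def)
next
  fix \<sigma> assume "\<sigma> \<in> stab_frame X \<Phi> x0"
  then have \<sigma>: "\<sigma> \<in> carrier (sym_group_frame X \<Phi>)" "\<sigma> x0 = x0" by (auto simp: stab_frame_def)
  then show "m_inv (sym_group_frame X \<Phi>) \<sigma> \<in> stab_frame X \<Phi> x0"
    using inv_in_sym_group_frame[OF \<sigma>(1)] permutes_inverses(2)[OF sym_group_frame_memD(1)[OF \<sigma>(1)], of x0]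
    by (simp add: m_inv_sym_group_frame stab_frame_def)
next
  fix \<sigma> \<tau> assume "\<sigma> \<in> stab_frame X \<Phi> x0" "\<tau> \<in> stab_frame X \<Phi> x0"
  then show "\<sigma> \<otimes>\<^bsub>sym_group_frame X \<Phi>\<^esub> \<tau> \<in> stab_frame X \<Phi> x0"
    by (auto simp: stab_frame_def comp_in_sym_group_frame)
qed

lemma bij_betw_transporters:
  assumes x0: "x0 \<in> X" and trans: "\<forall>x\<in>X. \<forall>y\<in>X. \<exists>\<sigma>\<in>carrier (sym_group_frame X \<Phi>). \<sigma> x = y"
  shows "bij_betw (transporters X \<Phi> x0) X (lcosets (sym_group_frame X \<Phi>) (stab_frame X \<Phi> x0))"
proof (rule bij_betw_imageI)
  show "inj_on (transporters X \<Phi> x0) X"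
  proof (rule inj_onI)
    fix x y assume "x \<in> X" "y \<in> X" and eq: "transporters X \<Phi> x0 x = transporters X \<Phi> x0 y"
    obtain \<sigma> where "\<sigma> \<in> transporters X \<Phi> x0 x" using trans x0 \<open>x \<in> X\<close> by (auto simp: transporters_def)
    then show "x = y" using eq by (auto simp: transporters_def)
  qed
  show "transporters X \<Phi> x0 ` X = lcosets (sym_group_frame X \<Phi>) (stab_frame X \<Phi> x0)"
  proof
    show "transporters X \<Phi> x0 ` X \<subseteq> lcosets (sym_group_frame X \<Phi>) (stab_frame X \<Phi> x0)"
    proof
      fix A assume "A \<in> transporters X \<Phi> x0 ` X"
      then obtain \<sigma> where "\<sigma> \<in> carrier (sym_group_frame X \<Phi>)" "A = transporters X \<Phi> x0 (\<sigma> x0)"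
        using trans x0 by fastforce
      then show "A \<in> lcosets (sym_group_frame X \<Phi>) (stab_frame X \<Phi> x0)"
        unfolding lcosets_def by (metis (mono_tags, lifting) l_coset_stab_frame mem_Collect_eq)
    qed
    show "lcosets (sym_group_frame X \<Phi>) (stab_frame X \<Phi> x0) \<subseteq> transporters X \<Phi> x0 ` X"
      using x0 by (auto simp: lcosets_def l_coset_stab_frame permutes_in_image sym_group_frame_memD(1))
  qed
qed

end

lemma is_frame_comp_permutes:
  assumes frame: "is_frame X \<Phi>" and \<sigma>: "\<sigma> permutes X"
  shows "is_frame X (\<Phi> \<circ> \<sigma>)"
  unfolding is_frame_def
proof (intro conjI allI)
  show "finite X" using frame by (simp add: is_frame_def)
  fix w
  obtain c where "w = (\<Sum>x\<in>X. c x *s \<Phi> x)" using is_frame_lincombE[OF frame] .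
  then have "w = (\<Sum>x\<in>X. c (\<sigma> x) *s (\<Phi> \<circ> \<sigma>) x)"
    using sum.permute[OF \<sigma>, of "\<lambda>y. c y *s \<Phi> y"] by simp
  then show "\<exists>c. w = (\<Sum>x\<in>X. c x *s (\<Phi> \<circ> \<sigma>) x)" by (rule exI[where x = "\<lambda>x. c (\<sigma> x)"])
qed

definition sym_group_frame_rep :: "'x set \<Rightarrow> ('x \<Rightarrow> complex^'n) \<Rightarrow> ('x \<Rightarrow> 'x) \<Rightarrow> complex^'n^'n" where
  "sym_group_frame_rep X \<Phi> \<sigma> = transfer_mat X \<Phi> (\<Phi> \<circ> \<sigma>)"

context
  fixes X :: "'x set" and \<Phi> :: "'x \<Rightarrow> complex^'n"
  assumes frame: "is_frame X \<Phi>"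
begin

lemma is_frame_finite: "finite X"
  using frame by (simp add: is_frame_def)

lemma sym_group_frame_rep_frame:
  assumes "\<sigma> \<in> carrier (sym_group_frame X \<Phi>)" "y \<in> X"
  shows "sym_group_frame_rep X \<Phi> \<sigma> *v \<Phi> y = \<Phi> (\<sigma> y)"
  using transfer_mat_frame[OF frame _ assms(2), of "\<Phi> \<circ> \<sigma>"] sym_group_frame_memD(2)[OF is_frame_finite assms(1)]
  by (simp add: sym_group_frame_rep_def gram_def)

lemma unitary_rep_sym_group_frame: "unitary_rep (sym_group_frame X \<Phi>) (sym_group_frame_rep X \<Phi>)"
  unfolding unitary_rep_def
proof (intro conjI ballI)
  fix \<sigma> assume \<sigma>: "\<sigma> \<in> carrier (sym_group_frame X \<Phi>)"
  show "unitary_mat (sym_group_frame_rep X \<Phi> \<sigma>)"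
    unfolding sym_group_frame_rep_def
    using unitary_transfer_mat[OF frame is_frame_comp_permutes[OF frame sym_group_frame_memD(1)[OF is_frame_finite \<sigma>]]]
      sym_group_frame_memD(2)[OF is_frame_finite \<sigma>] by (simp add: gram_def)
  fix \<tau> assume \<tau>: "\<tau> \<in> carrier (sym_group_frame X \<Phi>)"
  show "sym_group_frame_rep X \<Phi> (\<sigma> \<otimes>\<^bsub>sym_group_frame X \<Phi>\<^esub> \<tau>) = sym_group_frame_rep X \<Phi> \<sigma> ** sym_group_frame_rep X \<Phi> \<tau>"
  proof (rule mat_eq_if_eq_on_frame[OF frame], intro ballI)
    fix y assume y: "y \<in> X"
    have "\<tau> y \<in> X" using y permutes_in_image[OF sym_group_frame_memD(1)[OF is_frame_finite \<tau>]] by simp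
    then show "sym_group_frame_rep X \<Phi> (\<sigma> \<otimes>\<^bsub>sym_group_frame X \<Phi>\<^esub> \<tau>) *v \<Phi> y
        = (sym_group_frame_rep X \<Phi> \<sigma> ** sym_group_frame_rep X \<Phi> \<tau>) *v \<Phi> y"
      using y \<sigma> \<tau> comp_in_sym_group_frame[OF is_frame_finite \<sigma> \<tau>]
      by (simp add: sym_group_frame_rep_frame matrix_vector_mul_assoc[symmetric])
  qed
qed

lemma GH_frame_via_sym_group_frame:
  assumes x0: "x0 \<in> X" and trans: "\<forall>x\<in>X. \<forall>y\<in>X. \<exists>\<sigma>\<in>carrier (sym_group_frame X \<Phi>). \<sigma> x = y"
  shows "GH_frame_via (sym_group_frame X \<Phi>) (stab_frame X \<Phi> x0) X \<Phi> (transporters X \<Phi> x0)"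
  unfolding GH_frame_via_def
proof (intro conjI exI)
  show "group (sym_group_frame X \<Phi>)" "finite (carrier (sym_group_frame X \<Phi>))"
    "subgroup (stab_frame X \<Phi> x0) (sym_group_frame X \<Phi>)"
    "bij_betw (transporters X \<Phi> x0) X (lcosets (sym_group_frame X \<Phi>) (stab_frame X \<Phi> x0))"
    "unitary_rep (sym_group_frame X \<Phi>) (sym_group_frame_rep X \<Phi>)"
    using is_frame_finite x0 trans by (simp_all add: group_sym_group_frame finite_carrier_sym_group_frame
        subgroup_stab_frame bij_betw_transporters unitary_rep_sym_group_frame)
  show "\<forall>h\<in>stab_frame X \<Phi> x0. sym_group_frame_rep X \<Phi> h *v \<Phi> x0 = \<Phi> x0"
    using x0 by (simp add: stab_frame_def sym_group_frame_rep_frame)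
  show "\<forall>x\<in>X. \<forall>\<sigma>\<in>carrier (sym_group_frame X \<Phi>).
      transporters X \<Phi> x0 x = \<sigma> <#\<^bsub>sym_group_frame X \<Phi>\<^esub> stab_frame X \<Phi> x0 \<longrightarrow>
      \<Phi> x = sym_group_frame_rep X \<Phi> \<sigma> *v \<Phi> x0"
  proof (intro ballI impI)
    fix x \<sigma> assume x: "x \<in> X" and \<sigma>: "\<sigma> \<in> carrier (sym_group_frame X \<Phi>)"
      and "transporters X \<Phi> x0 x = \<sigma> <#\<^bsub>sym_group_frame X \<Phi>\<^esub> stab_frame X \<Phi> x0"
    then have "\<sigma> \<in> transporters X \<Phi> x0 x"
      by (simp add: l_coset_stab_frame[OF is_frame_finite \<sigma>] transporters_def)
    then show "\<Phi> x = sym_group_frame_rep X \<Phi> \<sigma> *v \<Phi> x0"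
      using x0 \<sigma> by (simp add: transporters_def sym_group_frame_rep_frame)
  qed
qed

end

lemma gelfand_pair_transfer:
  fixes G :: "('g, 'b) monoid_scheme" and K :: "('k, 'c) monoid_scheme"
  assumes gelfand: "gelfand_pair G H"
    and f: "bij_betw f (lcosets G H) (lcosets K L)"
    and equivariant: "\<And>g. g \<in> carrier G \<Longrightarrow>
      \<exists>k\<in>carrier K. \<forall>a\<in>lcosets G H. f (g <#\<^bsub>G\<^esub> a) = k <#\<^bsub>K\<^esub> f a"
  shows "gelfand_pair K L"
  unfolding gelfand_pair_def
proof (intro allI impI ballI)
  fix M N :: "'k set \<Rightarrow> 'k set \<Rightarrow> complex" and A B
  assume inv: "\<forall>k\<in>carrier K. \<forall>a\<in>lcosets K L. \<forall>b\<in>lcosets K L.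
      M (k <#\<^bsub>K\<^esub> a) (k <#\<^bsub>K\<^esub> b) = M a b \<and> N (k <#\<^bsub>K\<^esub> a) (k <#\<^bsub>K\<^esub> b) = N a b"
    and A: "A \<in> lcosets K L" and B: "B \<in> lcosets K L"
  define M' where "M' a b = M (f a) (f b)" for a b
  define N' where "N' a b = N (f a) (f b)" for a b
  have "\<forall>g\<in>carrier G. \<forall>a\<in>lcosets G H. \<forall>b\<in>lcosets G H.
      M' (g <#\<^bsub>G\<^esub> a) (g <#\<^bsub>G\<^esub> b) = M' a b \<and> N' (g <#\<^bsub>G\<^esub> a) (g <#\<^bsub>G\<^esub> b) = N' a b"
  proof (intro ballI)
    fix g a b assume g: "g \<in> carrier G" and a: "a \<in> lcosets G H" and b: "b \<in> lcosets G H"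
    obtain k where "k \<in> carrier K" "\<forall>a\<in>lcosets G H. f (g <#\<^bsub>G\<^esub> a) = k <#\<^bsub>K\<^esub> f a"
      using equivariant[OF g] ..
    then show "M' (g <#\<^bsub>G\<^esub> a) (g <#\<^bsub>G\<^esub> b) = M' a b \<and> N' (g <#\<^bsub>G\<^esub> a) (g <#\<^bsub>G\<^esub> b) = N' a b"
      using inv a b bij_betw_apply[OF f] by (simp add: M'_def N'_def)
  qed
  then have commute: "\<forall>a\<in>lcosets G H. \<forall>b\<in>lcosets G H.
      (\<Sum>c\<in>lcosets G H. M' a c * N' c b) = (\<Sum>c\<in>lcosets G H. N' a c * M' c b)"
    using gelfand[unfolded gelfand_pair_def, rule_format, of M' N'] by blast
  have surj: "f ` lcosets G H = lcosets K L" by (rule bij_betw_imp_surj_on[OF f])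
  obtain a where "A = f a" "a \<in> lcosets G H" using A unfolding surj[symmetric] by (rule imageE)
  moreover obtain b where "B = f b" "b \<in> lcosets G H" using B unfolding surj[symmetric] by (rule imageE)
  ultimately show "(\<Sum>C\<in>lcosets K L. M A C * N C B) = (\<Sum>C\<in>lcosets K L. N A C * M C B)"
    using commute by (simp add: sum.reindex_bij_betw[OF f, symmetric] M'_def N'_def)
qed

lemma l_coset_in_lcosets:
  assumes "group G" "subgroup H G" "g \<in> carrier G" "a \<in> lcosets G H"
  shows "g <#\<^bsub>G\<^esub> a \<in> lcosets G H"
proof -
  obtain b where b: "b \<in> carrier G" "a = b <#\<^bsub>G\<^esub> H" using assms(4) by (auto simp: lcosets_def)
  then have "g <#\<^bsub>G\<^esub> a = (g \<otimes>\<^bsub>G\<^esub> b) <#\<^bsub>G\<^esub> H"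
    using assms by (simp add: group.lcos_m_assoc subgroup.subset)
  then show ?thesis using assms b by (auto simp: lcosets_def group.is_monoid monoid.m_closed)
qed

lemma lcosets_subset_carrier:
  assumes "group G" "subgroup H G" "a \<in> lcosets G H"
  shows "a \<subseteq> carrier G"
  using assms group.l_coset_subset_G[OF assms(1) subgroup.subset[OF assms(2)]] by (auto simp: lcosets_def)

text \<open>Outside \<open>X\<close> the action is the identity, so that each \<open>coset_action G X \<beta> g\<close> permutes \<open>X\<close>.\<close>
definition coset_action :: "('g, 'b) monoid_scheme \<Rightarrow> 'x set \<Rightarrow> ('x \<Rightarrow> 'g set) \<Rightarrow> 'g \<Rightarrow> 'x \<Rightarrow> 'x" where
  "coset_action G X \<beta> g x = (if x \<in> X then inv_into X \<beta> (g <#\<^bsub>G\<^esub> \<beta> x) else x)"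

context
  fixes G :: "('g, 'b) monoid_scheme" and H X and \<beta> :: "'x \<Rightarrow> 'g set"
  assumes grp: "group G" and sub: "subgroup H G" and \<beta>: "bij_betw \<beta> X (lcosets G H)"
begin

lemma coset_action_in:
  assumes "g \<in> carrier G" "x \<in> X"
  shows "coset_action G X \<beta> g x \<in> X" and "\<beta> (coset_action G X \<beta> g x) = g <#\<^bsub>G\<^esub> \<beta> x"
proof -
  have "g <#\<^bsub>G\<^esub> \<beta> x \<in> \<beta> ` X"
    using l_coset_in_lcosets[OF grp sub assms(1) bij_betw_apply[OF \<beta> assms(2)]] bij_betw_imp_surj_on[OF \<beta>]
    by simp
  then show "coset_action G X \<beta> g x \<in> X" "\<beta> (coset_action G X \<beta> g x) = g <#\<^bsub>G\<^esub> \<beta> x"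
    using assms(2) by (simp_all add: coset_action_def inv_into_into f_inv_into_f)
qed

lemma coset_action_inverse:
  assumes g: "g \<in> carrier G" and x: "x \<in> X"
  shows "coset_action G X \<beta> (m_inv G g) (coset_action G X \<beta> g x) = x"
proof -
  have ig: "m_inv G g \<in> carrier G" using group.inv_closed[OF grp g] .
  have "\<beta> (coset_action G X \<beta> (m_inv G g) (coset_action G X \<beta> g x)) = (m_inv G g \<otimes>\<^bsub>G\<^esub> g) <#\<^bsub>G\<^esub> \<beta> x"
    using coset_action_in[OF ig coset_action_in(1)[OF g x]] coset_action_in[OF g x]
      group.lcos_m_assoc[OF grp lcosets_subset_carrier[OF grp sub bij_betw_apply[OF \<beta> x]] ig g] by simp
  also have "\<dots> = \<beta> x"
    using group.l_inv[OF grp g] group.lcos_mult_one[OF grp lcosets_subset_carrier[OF grp sub bij_betw_apply[OF \<beta> x]]]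
    by simp
  finally show ?thesis
    using bij_betw_imp_inj_on[OF \<beta>] coset_action_in(1)[OF ig coset_action_in(1)[OF g x]] x
    by (auto dest: inj_onD)
qed

lemma coset_action_permutes:
  assumes g: "g \<in> carrier G"
  shows "coset_action G X \<beta> g permutes X"
proof (rule bij_imp_permutes)
  have ig: "m_inv G g \<in> carrier G" using group.inv_closed[OF grp g] .
  show "bij_betw (coset_action G X \<beta> g) X X"
  proof (rule bij_betw_byWitness[where f' = "coset_action G X \<beta> (m_inv G g)"])
    show "\<forall>x\<in>X. coset_action G X \<beta> (m_inv G g) (coset_action G X \<beta> g x) = x"
      using coset_action_inverse[OF g] by blast
    show "\<forall>x\<in>X. coset_action G X \<beta> g (coset_action G X \<beta> (m_inv G g) x) = x"
      using coset_action_inverse[OF ig] group.inv_inv[OF grp g] by simp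
    show "coset_action G X \<beta> g ` X \<subseteq> X" "coset_action G X \<beta> (m_inv G g) ` X \<subseteq> X"
      using coset_action_in(1) g ig by blast+
  qed
qed (simp add: coset_action_def)

lemma coset_action_transitive:
  assumes x: "x \<in> X" and y: "y \<in> X"
  shows "\<exists>g\<in>carrier G. coset_action G X \<beta> g x = y"
proof -
  obtain a b where a: "a \<in> carrier G" "\<beta> x = a <#\<^bsub>G\<^esub> H" and b: "b \<in> carrier G" "\<beta> y = b <#\<^bsub>G\<^esub> H"
    using bij_betw_apply[OF \<beta> x] bij_betw_apply[OF \<beta> y] by (auto simp: lcosets_def)
  define g where "g = b \<otimes>\<^bsub>G\<^esub> m_inv G a"
  have g: "g \<in> carrier G"
    unfolding g_def by (rule monoid.m_closed[OF group.is_monoid[OF grp] b(1) group.inv_closed[OF grp a(1)]])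
  have "g \<otimes>\<^bsub>G\<^esub> a = b"
    using group.inv_solve_right'[OF grp g b(1) a(1)] by (simp add: g_def)
  then have "\<beta> (coset_action G X \<beta> g x) = \<beta> y"
    using coset_action_in(2)[OF g x] a b group.lcos_m_assoc[OF grp subgroup.subset[OF sub] g a(1)] by simp
  then have "coset_action G X \<beta> g x = y"
    using bij_betw_imp_inj_on[OF \<beta>] coset_action_in(1)[OF g x] y by (auto dest: inj_onD)
  with g show ?thesis ..
qed

context
  fixes \<rho> :: "'g \<Rightarrow> complex^'n^'n" and v and \<Phi>
  assumes rep: "unitary_rep G \<rho>"
    and \<Phi>: "\<forall>x\<in>X. \<forall>g\<in>carrier G. \<beta> x = g <#\<^bsub>G\<^esub> H \<longrightarrow> \<Phi> x = \<rho> g *v v"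
begin

lemma frame_coset_action:
  assumes g: "g \<in> carrier G" and x: "x \<in> X"
  shows "\<Phi> (coset_action G X \<beta> g x) = \<rho> g *v \<Phi> x"
proof -
  obtain a where a: "a \<in> carrier G" "\<beta> x = a <#\<^bsub>G\<^esub> H"
    using bij_betw_apply[OF \<beta> x] by (auto simp: lcosets_def)
  have ga: "g \<otimes>\<^bsub>G\<^esub> a \<in> carrier G" using grp g a(1) by (simp add: group.is_monoid monoid.m_closed)
  have "\<beta> (coset_action G X \<beta> g x) = (g \<otimes>\<^bsub>G\<^esub> a) <#\<^bsub>G\<^esub> H"
    using coset_action_in(2)[OF g x] a group.lcos_m_assoc[OF grp subgroup.subset[OF sub] g a(1)] by simp
  then have "\<Phi> (coset_action G X \<beta> g x) = \<rho> (g \<otimes>\<^bsub>G\<^esub> a) *v v"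
    by (rule \<Phi>[rule_format, OF coset_action_in(1)[OF g x] ga])
  also have "\<dots> = \<rho> g *v (\<rho> a *v v)"
    using rep g a(1) by (simp add: unitary_rep_def matrix_vector_mul_assoc)
  also have "\<rho> a *v v = \<Phi> x" by (rule \<Phi>[rule_format, OF x a, symmetric])
  finally show ?thesis .
qed

lemma coset_action_in_sym_group_frame:
  assumes fin: "finite X" and g: "g \<in> carrier G"
  shows "coset_action G X \<beta> g \<in> carrier (sym_group_frame X \<Phi>)"
proof -
  have "unitary_mat (\<rho> g)" using rep g by (simp add: unitary_rep_def)
  then have "gram \<Phi> (coset_action G X \<beta> g x) (coset_action G X \<beta> g y) = gram \<Phi> x y"
    if "x \<in> X" "y \<in> X" for x y
    using that by (simp add: gram_def frame_coset_action[OF g] unitary_mat_def)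
  then show ?thesis
    using coset_action_permutes[OF g] by (simp add: carrier_sym_group_frame[OF fin])
qed

end

end

lemma GH_frameE:
  assumes "GH_frame G H X \<Phi>"
  obtains \<beta> \<rho> v where "group G" "subgroup H G" "bij_betw \<beta> X (lcosets G H)" "finite X" "unitary_rep G \<rho>"
    "\<forall>x\<in>X. \<forall>g\<in>carrier G. \<beta> x = g <#\<^bsub>G\<^esub> H \<longrightarrow> \<Phi> x = \<rho> g *v v"
proof -
  obtain \<beta> where frame: "GH_frame_via G H X \<Phi> \<beta>" using assms unfolding GH_frame_def ..
  then have G: "group G" "subgroup H G" "finite (carrier G)" and \<beta>: "bij_betw \<beta> X (lcosets G H)"
    by (simp_all add: GH_frame_via_def)
  have "finite (lcosets G H)"
    using G(3) by (simp add: lcosets_def Setcompr_eq_image)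
  then have "finite X" using bij_betw_finite[OF \<beta>] by simp
  moreover obtain \<rho> v where "unitary_rep G \<rho>" "\<forall>x\<in>X. \<forall>g\<in>carrier G. \<beta> x = g <#\<^bsub>G\<^esub> H \<longrightarrow> \<Phi> x = \<rho> g *v v"
    using frame unfolding GH_frame_via_def by blast
  ultimately show ?thesis using that G(1,2) \<beta> by blast
qed

lemma GH_frame_imp_transitive:
  assumes "GH_frame G H X \<Phi>"
  shows "\<forall>x\<in>X. \<forall>y\<in>X. \<exists>\<sigma>\<in>carrier (sym_group_frame X \<Phi>). \<sigma> x = y"
proof (intro ballI)
  fix x y assume "x \<in> X" "y \<in> X"
  obtain \<beta> \<rho> v where G: "group G" "subgroup H G" "bij_betw \<beta> X (lcosets G H)" "finite X" "unitary_rep G \<rho>"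
    "\<forall>x\<in>X. \<forall>g\<in>carrier G. \<beta> x = g <#\<^bsub>G\<^esub> H \<longrightarrow> \<Phi> x = \<rho> g *v v"
    using GH_frameE[OF assms] .
  obtain g where "g \<in> carrier G" "coset_action G X \<beta> g x = y"
    using coset_action_transitive[OF G(1-3) \<open>x \<in> X\<close> \<open>y \<in> X\<close>] ..
  then show "\<exists>\<sigma>\<in>carrier (sym_group_frame X \<Phi>). \<sigma> x = y"
    using coset_action_in_sym_group_frame[OF G(1-3,5-6,4)] by blast
qed

lemma GH_frame_gelfand_pair:
  assumes frame: "GH_frame G H X \<Phi>" and gelfand: "gelfand_pair G H" and x0: "x0 \<in> X"
  shows "gelfand_pair (sym_group_frame X \<Phi>) (stab_frame X \<Phi> x0)"
proof -
  obtain \<beta> \<rho> v where G: "group G" "subgroup H G" and \<beta>: "bij_betw \<beta> X (lcosets G H)" and fin: "finite X"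
    and rep: "unitary_rep G \<rho>" "\<forall>x\<in>X. \<forall>g\<in>carrier G. \<beta> x = g <#\<^bsub>G\<^esub> H \<longrightarrow> \<Phi> x = \<rho> g *v v"
    using GH_frameE[OF frame] .
  let ?f = "\<lambda>a. transporters X \<Phi> x0 (inv_into X \<beta> a)"
  have "bij_betw ?f (lcosets G H) (lcosets (sym_group_frame X \<Phi>) (stab_frame X \<Phi> x0))"
    using bij_betw_trans[OF bij_betw_inv_into[OF \<beta>]
        bij_betw_transporters[OF fin x0 GH_frame_imp_transitive[OF frame]]]
    by (simp add: comp_def)
  moreover have "\<exists>\<sigma>\<in>carrier (sym_group_frame X \<Phi>). \<forall>a\<in>lcosets G H.
      ?f (g <#\<^bsub>G\<^esub> a) = \<sigma> <#\<^bsub>sym_group_frame X \<Phi>\<^esub> ?f a" if g: "g \<in> carrier G" for g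
  proof (intro bexI ballI)
    show \<sigma>: "coset_action G X \<beta> g \<in> carrier (sym_group_frame X \<Phi>)"
      by (rule coset_action_in_sym_group_frame[OF G \<beta> rep fin g])
    fix a assume a: "a \<in> lcosets G H"
    define x where "x = inv_into X \<beta> a"
    have x: "x \<in> X" "\<beta> x = a"
      using a \<beta> by (auto simp: x_def bij_betw_def inv_into_into f_inv_into_f)
    have "inv_into X \<beta> (g <#\<^bsub>G\<^esub> a) = coset_action G X \<beta> g x"
      using coset_action_in[OF G \<beta> g x(1)] x(2) bij_betw_imp_inj_on[OF \<beta>] by (metis inv_into_f_f)
    then show "?f (g <#\<^bsub>G\<^esub> a) = coset_action G X \<beta> g <#\<^bsub>sym_group_frame X \<Phi>\<^esub> ?f a"
      by (simp add: l_coset_transporters[OF fin \<sigma>] x_def)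
  qed
  ultimately show ?thesis by (rule gelfand_pair_transfer[OF gelfand])
qed

lemma bij_betw_image_lcosets:
  assumes K: "group K" "subgroup L K" and \<phi>: "\<phi> \<in> iso K T"
  shows "bij_betw ((`) \<phi>) (lcosets K L) (lcosets T (\<phi> ` L))"
proof -
  have \<phi>_hom: "\<phi> \<in> hom K T" and \<phi>_bij: "bij_betw \<phi> (carrier K) (carrier T)"
    using \<phi> by (auto simp: iso_def)
  have "\<Union>(lcosets K L) \<subseteq> carrier K"
    using lcosets_subset_carrier[OF K] by blast
  then have "inj_on ((`) \<phi>) (lcosets K L)"
    by (rule inj_on_image[OF inj_on_subset[OF bij_betw_imp_inj_on[OF \<phi>_bij]]])
  moreover have "(`) \<phi> ` lcosets K L = (\<lambda>g. \<phi> g <#\<^bsub>T\<^esub> \<phi> ` L) ` carrier K"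
    using coset_hom(1)[OF \<phi>_hom subgroup.subset[OF K(2)]]
    by (simp add: lcosets_def Setcompr_eq_image image_image cong: image_cong)
  moreover have "\<dots> = (\<lambda>t. t <#\<^bsub>T\<^esub> \<phi> ` L) ` carrier T"
    by (simp add: bij_betw_imp_surj_on[OF \<phi>_bij, symmetric] image_image)
  moreover have "\<dots> = lcosets T (\<phi> ` L)" by (simp add: lcosets_def Setcompr_eq_image)
  ultimately show ?thesis by (simp add: bij_betw_def)
qed

lemma GH_frame_via_iso:
  assumes frame: "GH_frame_via K L X \<Phi> \<beta>" and \<phi>: "\<phi> \<in> iso K T" and T: "group T"
  shows "GH_frame_via T (\<phi> ` L) X \<Phi> (\<lambda>x. \<phi> ` \<beta> x)"
proof -
  obtain \<rho> v where K: "group K" "finite (carrier K)" "subgroup L K" and \<beta>: "bij_betw \<beta> X (lcosets K L)"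
    and rep: "unitary_rep K \<rho>" and fixed: "\<forall>l\<in>L. \<rho> l *v v = v"
    and \<Phi>: "\<forall>x\<in>X. \<forall>g\<in>carrier K. \<beta> x = g <#\<^bsub>K\<^esub> L \<longrightarrow> \<Phi> x = \<rho> g *v v"
    using frame unfolding GH_frame_via_def by blast
  define \<psi> where "\<psi> = inv_into (carrier K) \<phi>"
  have \<phi>_bij: "bij_betw \<phi> (carrier K) (carrier T)" using \<phi> by (simp add: iso_def)
  have \<psi>: "\<psi> \<in> iso T K" unfolding \<psi>_def by (rule group.iso_set_sym[OF K(1) \<phi>])
  have \<phi>\<psi>: "\<phi> (\<psi> t) = t" "\<psi> t \<in> carrier K" if "t \<in> carrier T" for t
    using \<phi>_bij that by (auto simp: \<psi>_def bij_betw_def f_inv_into_f inv_into_into)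
  have L: "L \<subseteq> carrier K" using subgroup.subset[OF K(3)] .
  have cosets: "bij_betw ((`) \<phi>) (lcosets K L) (lcosets T (\<phi> ` L))"
    by (rule bij_betw_image_lcosets[OF K(1,3) \<phi>])
  have "unitary_rep T (\<rho> \<circ> \<psi>)"
    using rep \<phi>\<psi>(2) hom_mult[OF iso_imp_homomorphism[OF \<psi>]] by (simp add: unitary_rep_def)
  moreover have "\<forall>l\<in>\<phi> ` L. (\<rho> \<circ> \<psi>) l *v v = v"
    using fixed L \<phi>_bij by (auto simp: \<psi>_def bij_betw_def)
  moreover have "\<forall>x\<in>X. \<forall>t\<in>carrier T. \<phi> ` \<beta> x = t <#\<^bsub>T\<^esub> \<phi> ` L \<longrightarrow> \<Phi> x = (\<rho> \<circ> \<psi>) t *v v"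
  proof (intro ballI impI)
    fix x t assume x: "x \<in> X" and t: "t \<in> carrier T" and eq: "\<phi> ` \<beta> x = t <#\<^bsub>T\<^esub> \<phi> ` L"
    have "\<psi> t <#\<^bsub>K\<^esub> L \<in> lcosets K L" using \<phi>\<psi>(2)[OF t] by (auto simp: lcosets_def)
    moreover have "\<phi> ` \<beta> x = \<phi> ` (\<psi> t <#\<^bsub>K\<^esub> L)"
      using eq coset_hom(1)[OF iso_imp_homomorphism[OF \<phi>] L \<phi>\<psi>(2)[OF t]] \<phi>\<psi>(1)[OF t] by simp
    ultimately have "\<beta> x = \<psi> t <#\<^bsub>K\<^esub> L"
      using bij_betw_imp_inj_on[OF cosets] bij_betw_apply[OF \<beta> x] by (auto dest: inj_onD)
    then show "\<Phi> x = (\<rho> \<circ> \<psi>) t *v v" using \<Phi> x \<phi>\<psi>(2)[OF t] by simp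
  qed
  moreover have "finite (carrier T)" using K(2) bij_betw_finite[OF \<phi>_bij] by simp
  moreover have "bij_betw (\<lambda>x. \<phi> ` \<beta> x) X (lcosets T (\<phi> ` L))"
    using bij_betw_trans[OF \<beta> cosets] by (simp add: comp_def)
  ultimately show ?thesis
    unfolding GH_frame_via_def using T subgroup.iso_subgroup[OF K(3) K(1) T \<phi>] by blast
qed

lemma homogeneous_frame_if_GH_frame_via:
  fixes K :: "('g, 'b) monoid_scheme"
  assumes frame: "GH_frame_via K L X \<Phi> \<beta>"
  shows "homogeneous_frame X \<Phi>"
proof -
  have K: "group K" "finite (carrier K)" using frame by (simp_all add: GH_frame_via_def)
  obtain f :: "'g \<Rightarrow> nat" where f: "inj_on f (carrier K)"
    using finite_imp_inj_to_nat_seg[OF K(2)] by blast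
  have "GH_frame_via (image_group f K) (f ` L) X \<Phi> (\<lambda>x. f ` \<beta> x)"
    by (rule GH_frame_via_iso[OF frame inj_imp_image_group_iso[OF f] group.inj_imp_image_group_is_group[OF K(1) f]])
  then show ?thesis unfolding homogeneous_frame_def GH_frame_def by blast
qed

lemma homogeneous_frame_iff_transitive:
  assumes frame: "is_frame X \<Phi>" and x0: "x0 \<in> X"
  shows "homogeneous_frame X \<Phi> \<longleftrightarrow> (\<forall>x\<in>X. \<forall>y\<in>X. \<exists>\<sigma>\<in>carrier (sym_group_frame X \<Phi>). \<sigma> x = y)"
proof
  assume "homogeneous_frame X \<Phi>"
  then obtain G :: "nat monoid" and H where "GH_frame G H X \<Phi>" unfolding homogeneous_frame_def by blast
  then show "\<forall>x\<in>X. \<forall>y\<in>X. \<exists>\<sigma>\<in>carrier (sym_group_frame X \<Phi>). \<sigma> x = y" by (rule GH_frame_imp_transitive)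
qed (rule homogeneous_frame_if_GH_frame_via[OF GH_frame_via_sym_group_frame[OF frame x0]])

theorem theorem3p5:
  fixes X :: "'x set" and \<Phi> :: "'x \<Rightarrow> complex^'n" and x0 :: 'x
  assumes frame: "is_frame X \<Phi>" and x0: "x0 \<in> X"
  shows
    "(homogeneous_frame X \<Phi> \<longleftrightarrow>
        (\<forall>x\<in>X. \<forall>y\<in>X. \<exists>\<sigma>\<in>carrier (sym_group_frame X \<Phi>). \<sigma> x = y))
     \<and> (\<forall>(G :: ('g, 'b) monoid_scheme) H. GH_frame G H X \<Phi> \<longrightarrow>
          (\<forall>x\<in>X. \<forall>y\<in>X. \<exists>\<sigma>\<in>carrier (sym_group_frame X \<Phi>). \<sigma> x = y))
     \<and> ((\<forall>x\<in>X. \<forall>y\<in>X. \<exists>\<sigma>\<in>carrier (sym_group_frame X \<Phi>). \<sigma> x = y) \<longrightarrow>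
          (\<exists>\<beta>. (\<forall>x\<in>X. \<forall>\<sigma>\<in>carrier (sym_group_frame X \<Phi>). \<sigma> x0 = x \<longrightarrow>
                    \<beta> x = \<sigma> <#\<^bsub>sym_group_frame X \<Phi>\<^esub> stab_frame X \<Phi> x0)
               \<and> GH_frame_via (sym_group_frame X \<Phi>) (stab_frame X \<Phi> x0) X \<Phi> \<beta>))
     \<and> (\<forall>(G :: ('g, 'b) monoid_scheme) H.
          GH_frame G H X \<Phi> \<and> gelfand_pair G H \<longrightarrow>
          gelfand_pair (sym_group_frame X \<Phi>) (stab_frame X \<Phi> x0))"
proof (intro conjI allI impI)
  show "homogeneous_frame X \<Phi> \<longleftrightarrow> (\<forall>x\<in>X. \<forall>y\<in>X. \<exists>\<sigma>\<in>carrier (sym_group_frame X \<Phi>). \<sigma> x = y)"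
    by (rule homogeneous_frame_iff_transitive[OF frame x0])
  show "\<forall>x\<in>X. \<forall>y\<in>X. \<exists>\<sigma>\<in>carrier (sym_group_frame X \<Phi>). \<sigma> x = y" if "GH_frame G H X \<Phi>"
    for G :: "('g, 'b) monoid_scheme" and H
    using that by (rule GH_frame_imp_transitive)
  show "gelfand_pair (sym_group_frame X \<Phi>) (stab_frame X \<Phi> x0)"
    if "GH_frame G H X \<Phi> \<and> gelfand_pair G H" for G :: "('g, 'b) monoid_scheme" and H
    using GH_frame_gelfand_pair[OF conjunct1[OF that] conjunct2[OF that] x0] .
  assume transitive: "\<forall>x\<in>X. \<forall>y\<in>X. \<exists>\<sigma>\<in>carrier (sym_group_frame X \<Phi>). \<sigma> x = y"
  show "\<exists>\<beta>. (\<forall>x\<in>X. \<forall>\<sigma>\<in>carrier (sym_group_frame X \<Phi>). \<sigma> x0 = x \<longrightarrow>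
      \<beta> x = \<sigma> <#\<^bsub>sym_group_frame X \<Phi>\<^esub> stab_frame X \<Phi> x0)
      \<and> GH_frame_via (sym_group_frame X \<Phi>) (stab_frame X \<Phi> x0) X \<Phi> \<beta>"
    using GH_frame_via_sym_group_frame[OF frame x0 transitive] l_coset_stab_frame[OF is_frame_finite[OF frame]]
    by (intro exI[where x = "transporters X \<Phi> x0"]) auto
qed

end
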